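(* Let $n\ge1$, let $G^\star=([n],E^\star)$ be a directed graph (directed cycles allowed), and let $S_1=\operatorname{argmin}_{(\mathcal P,\pi)\in\mathcal S}|E^{(1)}_{(\mathcal P,\pi)}|$. Then (i) the partially ordered partition associated with $G^\star$ belongs to $S_1$, and (ii) for every $(\mathcal P,\pi)\in S_1$, $E^{(1)}_{(\mathcal P,\pi)}$ equals the set of ordered pairs $(a,b)\in[n]^2$ such that $a$ and $b$ are $p$-adjacent in $G^\star$.
   Context: $[n]=\{1,\dots,n\}$. The observed distribution is Markov and faithful to $G^\star$; for distinct $a,b$ and $Z\subseteq[n]\setminus\{a,b\}$, $a\perp\!\!\!\perp b\mid Z$ means $a$ and $b$ are $d$-separated given $Z$ in $G^\star$, and $a\not\perp\!\!\!\perp b\mid Z$ is its negation. In a directed graph, $a$ is an ancestor of $b$ if $a=b$ or there is a directed path from $a$ to $b$. Distinct vertices $a,b$ are $p$-adjacent in a directed graph $G$ if there is an edge between them (in either direction), or $a$ and $b$ have a common child in $G$ which is an ancestor of $a$ or of $b$. $\mathcal S$ is the set of pairs $(\mathcal P,\pi)$ with $\mathcal P$ a partition of $[n]$ and $\pi$ a partial order on $\mathcal P$; $C_1\le_\pi C_2$ iff $(C_1,C_2)\in\pi$; $C_{i,\mathcal P}$ is the block containing $i$; $C\le_\pi\max\{C_1,\dots,C_t\}$ means $C\le_\pi C_i$ for some $i$. The strongly connected components of a directed graph $G$ are the classes of $i\sim j$ iff $i=j$ or there are directed paths $i\to j$ and $j\to i$; on them $C_1\le_G C_2$ iff $C_1=C_2$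 or there is a directed path from a vertex of $C_1$ to a vertex of $C_2$. The partially ordered partition associated with $G$ is (its set of strongly connected components, $\le_G$). For $(\mathcal P,\pi)\in\mathcal S$, $E^{(1)}_{(\mathcal P,\pi)}=\{(a,b)\in[n]^2: a\ne b,\ a\not\perp\!\!\!\perp b\mid\bigcup\{C\in\mathcal P: C\le_\pi\max\{C_{a,\mathcal P},C_{b,\mathcal P}\}\}\setminus\{a,b\}\}$. *)

theory Defs
  imports Main
begin

definition ancestor :: "(nat \<times> nat) set \<Rightarrow> nat \<Rightarrow> nat \<Rightarrow> bool" where
  "ancestor E a b \<longleftrightarrow> (a, b) \<in> E\<^sup>*"

text \<open>A path is a list of distinct vertices vs together with a list ds of edge
  orientations: ds!i = True means the edge vs!i \<rightarrow> vs!(i+1), False means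
  vs!(i+1) \<rightarrow> vs!i.\<close>

definition is_path :: "(nat \<times> nat) set \<Rightarrow> nat list \<Rightarrow> bool list \<Rightarrow> bool" where
  "is_path E vs ds \<longleftrightarrow> vs \<noteq> [] \<and> distinct vs \<and> length ds + 1 = length vs \<and>
     (\<forall>i < length ds. if ds ! i then (vs ! i, vs ! Suc i) \<in> E else (vs ! Suc i, vs ! i) \<in> E)"

definition collider :: "bool list \<Rightarrow> nat \<Rightarrow> bool" where
  "collider ds i \<longleftrightarrow> ds ! (i - 1) \<and> \<not> ds ! i"

definition d_connecting_path :: "(nat \<times> nat) set \<Rightarrow> nat set \<Rightarrow> nat list \<Rightarrow> bool list \<Rightarrow> bool" where
  "d_connecting_path E Z vs ds \<longleftrightarrow> is_path E vs ds \<and>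
     (\<forall>i. 0 < i \<and> i < length ds \<longrightarrow>
        (if collider ds i then (\<exists>z\<in>Z. ancestor E (vs ! i) z) else vs ! i \<notin> Z))"

definition d_separated :: "(nat \<times> nat) set \<Rightarrow> nat \<Rightarrow> nat \<Rightarrow> nat set \<Rightarrow> bool" where
  "d_separated E a b Z \<longleftrightarrow>
     \<not> (\<exists>vs ds. d_connecting_path E Z vs ds \<and> hd vs = a \<and> last vs = b)"

definition p_adjacent :: "(nat \<times> nat) set \<Rightarrow> nat \<Rightarrow> nat \<Rightarrow> bool" where
  "p_adjacent E a b \<longleftrightarrow> a \<noteq> b \<and>
     ((a, b) \<in> E \<or> (b, a) \<in> E \<or>
      (\<exists>c. (a, c) \<in> E \<and> (b, c) \<in> E \<and> (ancestor E c a \<or> ancestor E c b)))"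

definition is_partition :: "nat set set \<Rightarrow> nat set \<Rightarrow> bool" where
  "is_partition P A \<longleftrightarrow> {} \<notin> P \<and> \<Union>P = A \<and>
     (\<forall>C\<in>P. \<forall>D\<in>P. C \<noteq> D \<longrightarrow> C \<inter> D = {})"

definition popart :: "nat \<Rightarrow> (nat set set \<times> nat set rel) set" where
  "popart n = {(P, \<pi>). is_partition P {1..n} \<and> \<pi> \<subseteq> P \<times> P \<and> partial_order_on P \<pi>}"

definition block :: "nat set set \<Rightarrow> nat \<Rightarrow> nat set" where
  "block P i = (THE C. C \<in> P \<and> i \<in> C)"

definition E1 :: "nat \<Rightarrow> (nat \<times> nat) set \<Rightarrow> nat set set \<times> nat set rel \<Rightarrow> (nat \<times> nat) set" where
  "E1 n E s = (case s of (P, \<pi>) \<Rightarrow>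
     {(a, b). a \<in> {1..n} \<and> b \<in> {1..n} \<and> a \<noteq> b \<and>
        \<not> d_separated E a b
            (\<Union>{C \<in> P. (C, block P a) \<in> \<pi> \<or> (C, block P b) \<in> \<pi>} - {a, b})})"

definition S1 :: "nat \<Rightarrow> (nat \<times> nat) set \<Rightarrow> (nat set set \<times> nat set rel) set" where
  "S1 n E = {s \<in> popart n. \<forall>t \<in> popart n. card (E1 n E s) \<le> card (E1 n E t)}"

definition sccs :: "nat \<Rightarrow> (nat \<times> nat) set \<Rightarrow> nat set set" where
  "sccs n E = (\<lambda>i. {j \<in> {1..n}. (i, j) \<in> E\<^sup>* \<and> (j, i) \<in> E\<^sup>*}) ` {1..n}"

definition scc_order :: "nat \<Rightarrow> (nat \<times> nat) set \<Rightarrow> nat set rel" where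
  "scc_order n E = {(C1, C2). C1 \<in> sccs n E \<and> C2 \<in> sccs n E \<and>
      (C1 = C2 \<or> (\<exists>x\<in>C1. \<exists>y\<in>C2. (x, y) \<in> E\<^sup>*))}"

definition assoc_popart :: "nat \<Rightarrow> (nat \<times> nat) set \<Rightarrow> nat set set \<times> nat set rel" where
  "assoc_popart n E = (sccs n E, scc_order n E)"

end

theory Submission
  imports Defs
begin

(* Every p-adjacent pair is d-connected given any set Z: through the edge, through the
   collider a -> c <- b when c has a descendant in Z, and otherwise through the directed
   path a <- ... <- c <- b, which avoids Z.  Conversely, for the partition into strongly
   connected components the conditioning set of a pair a, b consists of all other
   ancestors of a or b.  Every vertex of a d-connecting path given such an ancestral set
   is itself an ancestor of a or b, so every interior vertex must be a collider; as two
   consecutive colliders are impossible, the path is an edge or a -> c <- b with c an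
   ancestor of a or b.  Hence E1 of the associated partition consists exactly of the
   p-adjacent pairs, which lie in E1 for every partially ordered partition. *)

lemma is_path_rev:
  assumes "is_path E vs ds"
  shows "is_path E (rev vs) (rev (map Not ds))"
  unfolding is_path_def
proof (intro conjI allI impI)
  let ?k = "length ds"
  have len: "length vs = Suc ?k" using assms unfolding is_path_def by simp
  show "rev vs \<noteq> []" "distinct (rev vs)" "length (rev (map Not ds)) + 1 = length (rev vs)"
    using assms unfolding is_path_def by auto
  fix i assume "i < length (rev (map Not ds))"
  then obtain m where m: "?k = Suc (i + m)" by (auto dest: less_imp_Suc_add)
  have "if ds ! m then (vs ! m, vs ! Suc m) \<in> E else (vs ! Suc m, vs ! m) \<in> E"
    using assms m unfolding is_path_def by simp
  moreover have "rev (map Not ds) ! i = (\<not> ds ! m)" "rev vs ! i = vs ! Suc m" "rev vs ! Suc i = vs ! m"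
    using m len by (simp_all add: rev_nth)
  ultimately show "if rev (map Not ds) ! i then (rev vs ! i, rev vs ! Suc i) \<in> E
                   else (rev vs ! Suc i, rev vs ! i) \<in> E"
    by simp
qed

lemma collider_rev:
  assumes "0 < i" "i < length ds"
  shows "collider (rev (map Not ds)) i = collider ds (length ds - i)"
proof -
  obtain m where m: "length ds = Suc (i + m)" using assms(2) by (auto dest: less_imp_Suc_add)
  obtain j where j: "i = Suc j" using assms(1) gr0_implies_Suc by blast
  show ?thesis using m unfolding collider_def j by (auto simp: rev_nth)
qed

lemma d_connecting_path_rev:
  assumes "d_connecting_path E Z vs ds"
  shows "d_connecting_path E Z (rev vs) (rev (map Not ds))"
  unfolding d_connecting_path_def
proof (intro conjI allI impI)
  show "is_path E (rev vs) (rev (map Not ds))"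
    using assms is_path_rev unfolding d_connecting_path_def by blast
  fix i assume i: "0 < i \<and> i < length (rev (map Not ds))"
  have len: "length vs = Suc (length ds)"
    using assms unfolding d_connecting_path_def is_path_def by simp
  have "0 < length ds - i" "length ds - i < length ds" using i by auto
  with assms have "if collider ds (length ds - i) then \<exists>z\<in>Z. ancestor E (vs ! (length ds - i)) z
        else vs ! (length ds - i) \<notin> Z"
    unfolding d_connecting_path_def by blast
  then show "if collider (rev (map Not ds)) i then \<exists>z\<in>Z. ancestor E (rev vs ! i) z
             else rev vs ! i \<notin> Z"
    using i len by (simp add: collider_rev rev_nth)
qed

lemma d_separated_sym: "d_separated E a b Z \<longleftrightarrow> d_separated E b a Z"
proof -
  have "\<not> d_separated E b a Z" if connected: "\<not> d_separated E a b Z" for a b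
  proof -
    obtain vs ds where "d_connecting_path E Z vs ds" "hd vs = a" "last vs = b"
      using connected unfolding d_separated_def by blast
    moreover from this(1) have "vs \<noteq> []"
      unfolding d_connecting_path_def is_path_def by simp
    ultimately show ?thesis
      unfolding d_separated_def using d_connecting_path_rev by (fastforce simp: hd_rev last_rev)
  qed
  then show ?thesis by blast
qed

lemma not_d_separated_directed_path:
  assumes "ws \<noteq> []" "distinct ws"
    and "\<And>i. Suc i < length ws \<Longrightarrow> (ws ! Suc i, ws ! i) \<in> E"
    and "\<And>i. 0 < i \<Longrightarrow> Suc i < length ws \<Longrightarrow> ws ! i \<notin> Z"
  shows "\<not> d_separated E (hd ws) (last ws) Z"
proof -
  let ?ds = "replicate (length ws - 1) False"
  have "d_connecting_path E Z ws ?ds"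
    using assms unfolding d_connecting_path_def is_path_def collider_def by auto
  then show ?thesis unfolding d_separated_def by blast
qed

lemma rtrancl_imp_distinct_path:
  assumes "(x, y) \<in> E\<^sup>*"
  obtains vs where "vs \<noteq> []" "distinct vs" "hd vs = y" "last vs = x"
    "\<And>i. Suc i < length vs \<Longrightarrow> (vs ! Suc i, vs ! i) \<in> E"
    "\<And>v. v \<in> set vs \<Longrightarrow> (x, v) \<in> E\<^sup>*"
proof -
  from assms have "\<exists>vs. vs \<noteq> [] \<and> distinct vs \<and> hd vs = y \<and> last vs = x \<and>
      (\<forall>i. Suc i < length vs \<longrightarrow> (vs ! Suc i, vs ! i) \<in> E) \<and> (\<forall>v\<in>set vs. (x, v) \<in> E\<^sup>*)"
  proof (induction rule: rtrancl_induct)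
    case base
    show ?case by (rule exI[of _ "[x]"]) simp
  next
    case (step y z)
    then obtain vs where vs: "vs \<noteq> []" "distinct vs" "hd vs = y" "last vs = x"
      "\<forall>i. Suc i < length vs \<longrightarrow> (vs ! Suc i, vs ! i) \<in> E" "\<forall>v\<in>set vs. (x, v) \<in> E\<^sup>*"
      by blast
    show ?case
    proof (cases "z \<in> set vs")
      case True
      \<comment> \<open>the walk revisits z: cut off the loop\<close>
      then obtain j where j: "j < length vs" "vs ! j = z" by (auto simp: in_set_conv_nth)
      then show ?thesis using vs
        by (intro exI[of _ "drop j vs"]) (auto simp: hd_drop_conv_nth dest: in_set_dropD)
    next
      case False
      have "((z # vs) ! Suc i, (z # vs) ! i) \<in> E" if "Suc i < length (z # vs)" for i
        using that vs(3,5) step(2) by (cases i) (auto simp: hd_conv_nth)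
      then show ?thesis using False vs step
        by (intro exI[of _ "z # vs"]) (auto intro: rtrancl_into_rtrancl)
    qed
  qed
  with that show ?thesis by blast
qed

lemma not_d_separated_edge:
  assumes "(a, b) \<in> E" "a \<noteq> b"
  shows "\<not> d_separated E a b Z"
  using not_d_separated_directed_path[of "[b, a]" E Z] assms d_separated_sym by auto

lemma not_d_separated_collider:
  assumes "(a, c) \<in> E" "(b, c) \<in> E" "distinct [a, b, c]" "z \<in> Z" "ancestor E c z"
  shows "\<not> d_separated E a b Z"
proof -
  have "d_connecting_path E Z [a, c, b] [True, False]"
    using assms unfolding d_connecting_path_def is_path_def collider_def
    by (auto simp: less_Suc_eq nth_Cons')
  then show ?thesis unfolding d_separated_def by force
qed

lemma not_d_separated_child_ancestor:
  assumes "(b, c) \<in> E" "ancestor E c a" "a \<noteq> b" and c_not_ancestor: "\<forall>z\<in>Z. \<not> ancestor E c z"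
  shows "\<not> d_separated E a b Z"
proof -
  obtain vs where vs: "vs \<noteq> []" "distinct vs" "hd vs = a" "last vs = c"
    "\<And>i. Suc i < length vs \<Longrightarrow> (vs ! Suc i, vs ! i) \<in> E"
    and descendants: "\<And>v. v \<in> set vs \<Longrightarrow> (c, v) \<in> E\<^sup>*"
    using assms(2) rtrancl_imp_distinct_path unfolding ancestor_def by metis
  have outside_Z: "v \<notin> Z" if "v \<in> set vs" for v
    using descendants[OF that] c_not_ancestor unfolding ancestor_def by (blast intro: rtrancl_trans)
  show ?thesis
  proof (cases "b \<in> set vs")
    case True
    then obtain j where j: "j < length vs" "vs ! j = b" by (auto simp: in_set_conv_nth)
    let ?ws = "take (Suc j) vs"
    have "\<not> d_separated E (hd ?ws) (last ?ws) Z"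
      using vs outside_Z by (intro not_d_separated_directed_path) (auto dest: in_set_takeD)
    moreover have "hd ?ws = a" "last ?ws = b" using vs j by (auto simp: last_conv_nth)
    ultimately show ?thesis by simp
  next
    case False
    let ?ws = "vs @ [b]"
    have "(?ws ! Suc i, ?ws ! i) \<in> E" if "Suc i < length ?ws" for i
    proof (cases "Suc i < length vs")
      case True
      then show ?thesis using vs(5) by (simp add: nth_append)
    next
      case False
      then have "i = length vs - 1" using that by simp
      then show ?thesis using vs(1,4) assms(1) False by (simp add: nth_append last_conv_nth)
    qed
    moreover have "?ws ! i \<notin> Z" if "Suc i < length ?ws" for i
      using that outside_Z by (simp add: nth_append)
    ultimately have "\<not> d_separated E (hd ?ws) (last ?ws) Z"
      using vs False by (intro not_d_separated_directed_path) auto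
    then show ?thesis using vs by simp
  qed
qed

lemma p_adjacent_imp_not_d_separated:
  assumes "p_adjacent E a b"
  shows "\<not> d_separated E a b Z"
proof -
  have "a \<noteq> b" using assms by (simp add: p_adjacent_def)
  \<comment> \<open>a common child c = a or c = b is an edge, so no irreflexivity is needed\<close>
  consider "(a, b) \<in> E" | "(b, a) \<in> E"
    | c where "(a, c) \<in> E" "(b, c) \<in> E" "c \<noteq> a" "c \<noteq> b" "ancestor E c a \<or> ancestor E c b"
    using assms unfolding p_adjacent_def by blast
  then show ?thesis
  proof cases
    case 1
    then show ?thesis using not_d_separated_edge \<open>a \<noteq> b\<close> by blast
  next
    case 2
    then show ?thesis using not_d_separated_edge \<open>a \<noteq> b\<close> d_separated_sym by metis
  next
    case (3 c)
    show ?thesis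
    proof (cases "\<exists>z\<in>Z. ancestor E c z")
      case True
      then show ?thesis using not_d_separated_collider 3 \<open>a \<noteq> b\<close> by fastforce
    next
      case False
      then show ?thesis
        using 3 \<open>a \<noteq> b\<close> not_d_separated_child_ancestor[of b c E a Z]
          not_d_separated_child_ancestor[of a c E b Z] d_separated_sym by metis
    qed
  qed
qed

definition ancestors :: "(nat \<times> nat) set \<Rightarrow> nat set \<Rightarrow> nat set" where
  "ancestors E B = {x. \<exists>y\<in>B. ancestor E x y}"

lemma ancestors_ancestor_closed:
  "ancestor E x y \<Longrightarrow> y \<in> ancestors E B \<Longrightarrow> x \<in> ancestors E B"
  unfolding ancestors_def ancestor_def by (blast intro: rtrancl_trans)

lemma ancestors_edge_closed: "(x, y) \<in> E \<Longrightarrow> y \<in> ancestors E B \<Longrightarrow> x \<in> ancestors E B"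
  using ancestors_ancestor_closed unfolding ancestor_def by blast

lemma subset_ancestors: "B \<subseteq> ancestors E B"
  unfolding ancestors_def ancestor_def by blast

context
  fixes E Z vs ds B
  assumes path: "d_connecting_path E Z vs ds"
    and Z_ancestral: "Z \<subseteq> ancestors E B"
    and ends_ancestral: "hd vs \<in> ancestors E B" "last vs \<in> ancestors E B"
begin

private lemma length_vs: "length vs = Suc (length ds)"
  using path unfolding d_connecting_path_def is_path_def by simp

private lemma first_ancestral: "vs ! 0 \<in> ancestors E B"
  using ends_ancestral length_vs by (cases vs) auto

private lemma last_ancestral: "vs ! length ds \<in> ancestors E B"
  using ends_ancestral length_vs last_conv_nth[of vs] by fastforce

private lemma path_edge:
  "i < length ds \<Longrightarrow> if ds ! i then (vs ! i, vs ! Suc i) \<in> E else (vs ! Suc i, vs ! i) \<in> E"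
  using path unfolding d_connecting_path_def is_path_def by blast

lemma d_connecting_path_collider_ancestral:
  assumes "0 < i" "i < length ds" "collider ds i"
  shows "vs ! i \<in> ancestors E B"
  using path assms Z_ancestral ancestors_ancestor_closed
  unfolding d_connecting_path_def by (metis subsetD)

lemma d_connecting_path_forward_tail_ancestral:
  "i < length ds \<Longrightarrow> ds ! i \<Longrightarrow> vs ! i \<in> ancestors E B"
proof (induction "length ds - i" arbitrary: i rule: less_induct)
  case (less i)
  have "vs ! Suc i \<in> ancestors E B"
  proof (cases "Suc i < length ds")
    case True
    then show ?thesis
      using less d_connecting_path_collider_ancestral[of "Suc i"] unfolding collider_def by fastforce
  next
    case False
    then have "Suc i = length ds" using less.prems by simp
    then show ?thesis using last_ancestral by simp
  qed
  then show ?case using path_edge[OF less.prems(1)] less.prems(2) ancestors_edge_closed by simp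
qed

lemma d_connecting_path_backward_tail_ancestral:
  "0 < i \<Longrightarrow> i \<le> length ds \<Longrightarrow> \<not> ds ! (i - 1) \<Longrightarrow> vs ! i \<in> ancestors E B"
proof (induction i rule: less_induct)
  case (less i)
  then obtain j where j: "i = Suc j" by (metis gr0_implies_Suc)
  have "vs ! j \<in> ancestors E B"
  proof (cases "j = 0")
    case True
    then show ?thesis using first_ancestral by simp
  next
    case False
    then show ?thesis
      using less j d_connecting_path_collider_ancestral[of j] unfolding collider_def by fastforce
  qed
  then show ?case using path_edge[of j] less.prems j ancestors_edge_closed by simp
qed

lemma d_connecting_path_ancestral: "set vs \<subseteq> ancestors E B"
proof
  fix v assume "v \<in> set vs"
  then obtain i where i: "i \<le> length ds" "v = vs ! i"
    using length_vs by (auto simp: in_set_conv_nth less_Suc_eq_le)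
  consider "i = 0" | "i = length ds" | "0 < i" "i < length ds" "collider ds i"
    | "i < length ds" "ds ! i" | "0 < i" "\<not> ds ! (i - 1)"
    using i(1) unfolding collider_def by linarith
  then show "v \<in> ancestors E B"
    using i first_ancestral last_ancestral d_connecting_path_collider_ancestral
      d_connecting_path_forward_tail_ancestral d_connecting_path_backward_tail_ancestral
    by cases auto
qed

end

lemma p_adjacent_if_not_d_separated_given_ancestors:
  assumes connected: "\<not> d_separated E a b (ancestors E {a, b} - {a, b})" and "a \<noteq> b"
  shows "p_adjacent E a b"
proof -
  let ?Z = "ancestors E {a, b} - {a, b}"
  obtain vs ds where path: "d_connecting_path E ?Z vs ds" "hd vs = a" "last vs = b"
    using connected unfolding d_separated_def by blast
  let ?k = "length ds"
  have len: "length vs = Suc ?k" and "distinct vs"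
    using path(1) unfolding d_connecting_path_def is_path_def by auto
  have first: "vs ! 0 = a" using path len by (cases vs) auto
  have last: "vs ! ?k = b" using path len last_conv_nth[of vs] by fastforce
  have edge: "if ds ! i then (vs ! i, vs ! Suc i) \<in> E else (vs ! Suc i, vs ! i) \<in> E"
    if "i < ?k" for i
    using path(1) that unfolding d_connecting_path_def is_path_def by blast
  have ancestral: "set vs \<subseteq> ancestors E {a, b}"
    using path subset_ancestors[of "{a, b}" E] by (intro d_connecting_path_ancestral) auto
  \<comment> \<open>an interior non-collider would be an ancestor of a or b outside the conditioning set\<close>
  have collider: "collider ds i" if "0 < i" "i < ?k" for i
  proof (rule ccontr)
    assume "\<not> collider ds i"
    then have "vs ! i \<notin> ?Z" using path(1) that unfolding d_connecting_path_def by auto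
    moreover have "vs ! i \<in> ancestors E {a, b}" using ancestral len that by auto
    moreover have "vs ! i \<noteq> a" "vs ! i \<noteq> b"
      using \<open>distinct vs\<close> first last that len nth_eq_iff_index_eq by fastforce+
    ultimately show False by blast
  qed
  have "?k \<noteq> 0" using first last \<open>a \<noteq> b\<close> by auto
  moreover have "\<not> 3 \<le> ?k"
    using collider[of 1] collider[of 2] unfolding collider_def by auto
  ultimately consider "?k = 1" | "?k = 2" by linarith
  then show ?thesis
  proof cases
    case 1
    then show ?thesis
      using edge[of 0] first last \<open>a \<noteq> b\<close> unfolding p_adjacent_def by (auto split: if_splits)
  next
    case 2
    then have "collider ds 1" using collider by simp
    then have "(a, vs ! 1) \<in> E" "(b, vs ! 1) \<in> E"
      using edge[of 0] edge[of 1] 2 first last unfolding collider_def by (simp_all add: numeral_2_eq_2)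
    moreover have "vs ! 1 \<in> ancestors E {a, b}" using ancestral len 2 nth_mem[of 1 vs] by auto
    ultimately show ?thesis using \<open>a \<noteq> b\<close> unfolding p_adjacent_def ancestors_def by blast
  qed
qed

definition scc :: "nat \<Rightarrow> (nat \<times> nat) set \<Rightarrow> nat \<Rightarrow> nat set" where
  "scc n E i = {j \<in> {1..n}. (i, j) \<in> E\<^sup>* \<and> (j, i) \<in> E\<^sup>*}"

lemma sccs_eq_image_scc: "sccs n E = scc n E ` {1..n}"
  unfolding sccs_def scc_def ..

lemma scc_self: "i \<in> {1..n} \<Longrightarrow> i \<in> scc n E i"
  unfolding scc_def by simp

lemma scc_subset: "scc n E i \<subseteq> {1..n}"
  unfolding scc_def by auto

lemma scc_eq_iff:
  assumes "i \<in> {1..n}" "j \<in> {1..n}"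
  shows "scc n E i = scc n E j \<longleftrightarrow> (i, j) \<in> E\<^sup>* \<and> (j, i) \<in> E\<^sup>*"
  using assms unfolding scc_def by (auto intro: rtrancl_trans)

lemma sccs_unique: "C \<in> sccs n E \<Longrightarrow> i \<in> C \<Longrightarrow> C = scc n E i"
  unfolding sccs_eq_image_scc scc_def by (auto intro: rtrancl_trans)

lemma scc_order_scc_iff:
  assumes "i \<in> {1..n}" "j \<in> {1..n}"
  shows "(scc n E i, scc n E j) \<in> scc_order n E \<longleftrightarrow> (i, j) \<in> E\<^sup>*"
proof
  assume "(scc n E i, scc n E j) \<in> scc_order n E"
  then consider "scc n E i = scc n E j" | x y where "x \<in> scc n E i" "y \<in> scc n E j" "(x, y) \<in> E\<^sup>*"
    unfolding scc_order_def by blast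
  then show "(i, j) \<in> E\<^sup>*"
    by cases (use assms scc_eq_iff in \<open>auto simp: scc_def intro: rtrancl_trans\<close>)
next
  assume "(i, j) \<in> E\<^sup>*"
  then show "(scc n E i, scc n E j) \<in> scc_order n E"
    using assms scc_self unfolding scc_order_def sccs_eq_image_scc by blast
qed

lemma is_partition_sccs: "is_partition (sccs n E) {1..n}"
  unfolding is_partition_def
proof (intro conjI ballI impI)
  show "{} \<notin> sccs n E" "\<Union> (sccs n E) = {1..n}"
    using scc_self scc_subset unfolding sccs_eq_image_scc by blast+
  fix C D assume "C \<in> sccs n E" "D \<in> sccs n E" "C \<noteq> D"
  then show "C \<inter> D = {}" using sccs_unique by blast
qed

lemma scc_orderE:
  assumes "(C, D) \<in> scc_order n E"
  obtains i j where "i \<in> {1..n}" "j \<in> {1..n}" "C = scc n E i" "D = scc n E j" "(i, j) \<in> E\<^sup>*"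
proof -
  obtain i j where ij: "i \<in> {1..n}" "j \<in> {1..n}" "C = scc n E i" "D = scc n E j"
    using assms unfolding scc_order_def sccs_eq_image_scc by blast
  with assms have "(i, j) \<in> E\<^sup>*" using scc_order_scc_iff by blast
  with ij that show ?thesis by blast
qed

lemma partial_order_on_scc_order: "partial_order_on (sccs n E) (scc_order n E)"
proof -
  have "scc_order n E \<subseteq> sccs n E \<times> sccs n E" "refl_on (sccs n E) (scc_order n E)"
    unfolding refl_on_def scc_order_def by auto
  moreover have "trans (scc_order n E)"
  proof (rule transI)
    fix C D F assume "(C, D) \<in> scc_order n E" "(D, F) \<in> scc_order n E"
    then obtain i j j' k where "i \<in> {1..n}" "j \<in> {1..n}" "j' \<in> {1..n}" "k \<in> {1..n}"
      "C = scc n E i" "scc n E j = scc n E j'" "F = scc n E k" "(i, j) \<in> E\<^sup>*" "(j', k) \<in> E\<^sup>*"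
      by (elim scc_orderE) metis
    then show "(C, F) \<in> scc_order n E"
      using scc_eq_iff scc_order_scc_iff by (metis rtrancl_trans)
  qed
  moreover have "antisym (scc_order n E)"
  proof (rule antisymI)
    fix C D assume "(C, D) \<in> scc_order n E" "(D, C) \<in> scc_order n E"
    then obtain i j where "i \<in> {1..n}" "j \<in> {1..n}" "C = scc n E i" "D = scc n E j"
      "(i, j) \<in> E\<^sup>*" "(j, i) \<in> E\<^sup>*"
      by (elim scc_orderE) (metis scc_order_scc_iff)
    then show "C = D" using scc_eq_iff by blast
  qed
  ultimately show ?thesis unfolding partial_order_on_def preorder_on_def by blast
qed

lemma assoc_popart_in_popart: "assoc_popart n E \<in> popart n"
  using is_partition_sccs partial_order_on_scc_order
  unfolding assoc_popart_def popart_def scc_order_def by auto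

lemma block_sccs:
  assumes "i \<in> {1..n}"
  shows "block (sccs n E) i = scc n E i"
  unfolding block_def
proof (rule the_equality)
  show "scc n E i \<in> sccs n E \<and> i \<in> scc n E i"
    using assms by (simp add: sccs_eq_image_scc scc_self)
  show "C = scc n E i" if "C \<in> sccs n E \<and> i \<in> C" for C
    using that sccs_unique by blast
qed

lemma ancestor_in_vertices:
  assumes "E \<subseteq> V \<times> V" "b \<in> V" "ancestor E a b"
  shows "a \<in> V"
  using assms(3,2) unfolding ancestor_def
  by (induction rule: converse_rtrancl_induct) (use assms(1) in auto)

lemma assoc_popart_conditioning_set:
  assumes "E \<subseteq> {1..n} \<times> {1..n}" "a \<in> {1..n}" "b \<in> {1..n}"
  shows "\<Union>{C \<in> sccs n E. (C, block (sccs n E) a) \<in> scc_order n E \<or> (C, block (sccs n E) b) \<in> scc_order n E}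
    = ancestors E {a, b}" (is "\<Union>?below = _")
proof (intro equalityI subsetI)
  fix x assume "x \<in> \<Union>?below"
  then obtain C where "C \<in> sccs n E" "x \<in> C"
    and "(C, scc n E a) \<in> scc_order n E \<or> (C, scc n E b) \<in> scc_order n E"
    using assms(2,3) by (auto simp: block_sccs)
  moreover from this have "C = scc n E x" "x \<in> {1..n}"
    using sccs_unique scc_subset by blast+
  ultimately show "x \<in> ancestors E {a, b}"
    using assms(2,3) scc_order_scc_iff unfolding ancestors_def ancestor_def by auto
next
  fix x assume "x \<in> ancestors E {a, b}"
  then have "x \<in> {1..n}" "(x, a) \<in> E\<^sup>* \<or> (x, b) \<in> E\<^sup>*"
    using assms ancestor_in_vertices unfolding ancestors_def ancestor_def by blast+
  then have "scc n E x \<in> ?below"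
    unfolding block_sccs[OF assms(2)] block_sccs[OF assms(3)]
    using assms(2,3) by (auto simp: scc_order_scc_iff sccs_eq_image_scc)
  then show "x \<in> \<Union>?below" using scc_self \<open>x \<in> {1..n}\<close> by blast
qed

lemma p_adjacent_pairs_subset_E1:
  "{(a, b). a \<in> {1..n} \<and> b \<in> {1..n} \<and> p_adjacent E a b} \<subseteq> E1 n E s"
proof (clarify)
  fix a b assume "a \<in> {1..n}" "b \<in> {1..n}" "p_adjacent E a b"
  moreover from this(3) have "a \<noteq> b" unfolding p_adjacent_def by simp
  ultimately show "(a, b) \<in> E1 n E s"
    using p_adjacent_imp_not_d_separated unfolding E1_def by (cases s) auto
qed

lemma E1_assoc_popart:
  assumes "E \<subseteq> {1..n} \<times> {1..n}"
  shows "E1 n E (assoc_popart n E) = {(a, b). a \<in> {1..n} \<and> b \<in> {1..n} \<and> p_adjacent E a b}"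
proof
  show "E1 n E (assoc_popart n E) \<subseteq> {(a, b). a \<in> {1..n} \<and> b \<in> {1..n} \<and> p_adjacent E a b}"
    using p_adjacent_if_not_d_separated_given_ancestors assoc_popart_conditioning_set[OF assms]
    unfolding E1_def assoc_popart_def by auto
qed (rule p_adjacent_pairs_subset_E1)

lemma finite_E1: "finite (E1 n E s)"
proof (rule finite_subset)
  show "E1 n E s \<subseteq> {1..n} \<times> {1..n}" unfolding E1_def by (cases s) auto
qed simp

lemma argmin_card_eq_least_superset:
  assumes "\<And>t. t \<in> X \<Longrightarrow> M \<subseteq> F t \<and> finite (F t)" "s \<in> X" "F s = M"
  shows "{s \<in> X. \<forall>t \<in> X. card (F s) \<le> card (F t)} = {s \<in> X. F s = M}"
  using assms by (auto intro: card_mono dest: card_seteq[rotated])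

theorem proposition3p8:
  fixes n :: nat and E :: "(nat \<times> nat) set"
  assumes "n \<ge> 1"
    and "E \<subseteq> {1..n} \<times> {1..n}"
    and "\<forall>i. (i, i) \<notin> E"
  shows "assoc_popart n E \<in> S1 n E \<and>
         (\<forall>s \<in> S1 n E. E1 n E s =
            {(a, b). a \<in> {1..n} \<and> b \<in> {1..n} \<and> p_adjacent E a b})"
proof -
  let ?PA = "{(a, b). a \<in> {1..n} \<and> b \<in> {1..n} \<and> p_adjacent E a b}"
  have "S1 n E = {s \<in> popart n. E1 n E s = ?PA}"
    unfolding S1_def
    using p_adjacent_pairs_subset_E1 finite_E1 assoc_popart_in_popart E1_assoc_popart[OF assms(2)]
    by (intro argmin_card_eq_least_superset[where s = "assoc_popart n E"]) auto
  then show ?thesis using assoc_popart_in_popart E1_assoc_popart[OF assms(2)] by simp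
qed

end
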